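(* Fix an undirected unweighted graph $G=(V,E)$ on $N$ vertices and $\delta\in[0,1]$. Let $r_1=1$ and $r_2\ge r_1$. There exists a coupling of two mixed $\delta$-updating chains $(S_t^{(1)})_{t\ge0}$ with mutant fitness $r_1$ and $(S_t^{(2)})_{t\ge0}$ with mutant fitness $r_2$, both started from the same $S_0\subseteq V$, such that $S_t^{(2)}\supseteq S_t^{(1)}$ for all $t\ge0$.
   Context: Mixed $\delta$-updating with mutant fitness $r$ on $G$: $S_t$ is the set of mutants after $t$ steps; each mutant has fitness $r$ and each wild-type fitness $1$; $f_S(x)$ is the fitness at $x$ when $S$ is the mutant set. At each step, with probability $\delta$ a death-Birth step: choose $v$ uniformly to die, choose a neighbor $u$ of $v$ with probability proportional to $f_S(u)$, $u$ copies its type onto $v$; with probability $1-\delta$ a Birth-death step: choose $u$ with probability proportional to $f_S(u)$ among all vertices, choose a uniformly random neighbor $v$ of $u$, $u$ copies its type onto $v$. *)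

theory Defs
  imports "HOL-Probability.Probability"
begin

definition nbrs :: "'a set \<Rightarrow> ('a \<Rightarrow> 'a \<Rightarrow> bool) \<Rightarrow> 'a \<Rightarrow> 'a set" where
  "nbrs V E x = {y \<in> V. E x y}"

definition fit :: "real \<Rightarrow> 'a set \<Rightarrow> 'a \<Rightarrow> real" where
  "fit r S x = (if x \<in> S then r else 1)"

definition wchoice :: "('a \<Rightarrow> real) \<Rightarrow> 'a set \<Rightarrow> 'a pmf" where
  "wchoice w A = embed_pmf (\<lambda>x. if x \<in> A then w x / (\<Sum>y\<in>A. w y) else 0)"

definition copy_type :: "'a set \<Rightarrow> 'a \<Rightarrow> 'a \<Rightarrow> 'a set" where
  "copy_type S u v = (if u \<in> S then insert v S else S - {v})"

definition dB_step :: "'a set \<Rightarrow> ('a \<Rightarrow> 'a \<Rightarrow> bool) \<Rightarrow> real \<Rightarrow> 'a set \<Rightarrow> 'a set pmf" where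
  "dB_step V E r S = bind_pmf (pmf_of_set V) (\<lambda>v.
     if nbrs V E v = {} then return_pmf S
     else bind_pmf (wchoice (fit r S) (nbrs V E v)) (\<lambda>u. return_pmf (copy_type S u v)))"

definition Bd_step :: "'a set \<Rightarrow> ('a \<Rightarrow> 'a \<Rightarrow> bool) \<Rightarrow> real \<Rightarrow> 'a set \<Rightarrow> 'a set pmf" where
  "Bd_step V E r S = bind_pmf (wchoice (fit r S) V) (\<lambda>u.
     if nbrs V E u = {} then return_pmf S
     else bind_pmf (pmf_of_set (nbrs V E u)) (\<lambda>v. return_pmf (copy_type S u v)))"

definition mixed_step :: "real \<Rightarrow> 'a set \<Rightarrow> ('a \<Rightarrow> 'a \<Rightarrow> bool) \<Rightarrow> real \<Rightarrow> 'a set \<Rightarrow> 'a set pmf" where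
  "mixed_step \<delta> V E r S = bind_pmf (bernoulli_pmf \<delta>) (\<lambda>b.
     if b then dB_step V E r S else Bd_step V E r S)"

text \<open>X is (on the probability space M) a Markov chain with kernel K started at S0:
  all finite-dimensional distributions are the ones of the chain.\<close>
definition is_markov_chain ::
  "'b measure \<Rightarrow> (nat \<Rightarrow> 'b \<Rightarrow> 's) \<Rightarrow> ('s \<Rightarrow> 's pmf) \<Rightarrow> 's \<Rightarrow> bool" where
  "is_markov_chain M X K s0 \<longleftrightarrow>
     (\<forall>t. X t \<in> measurable M (count_space UNIV)) \<and>
     (\<forall>n (hs :: 's list). length hs = Suc n \<longrightarrow>
        measure M {\<omega> \<in> space M. \<forall>i\<le>n. X i \<omega> = hs ! i}
        = (if hs ! 0 = s0 then 1 else 0) * (\<Prod>i<n. pmf (K (hs ! i)) (hs ! Suc i)))"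

end

theory Submission
  imports Defs
begin

(* Couple the two chains step by step so that the inclusion S1 \<subseteq> S2 is preserved; both chains
   use the same delta-coin.

   death-Birth: both chains kill the same vertex v.  The new type of v is a coin whose bias is
   the probability of choosing a mutant neighbour; it is larger in the second chain, which has
   more mutants and fitter ones, so the coins can be coupled monotonically.

   Birth-death: the first chain picks its parent uniformly, while the parent law of the second
   chain is a mixture of the uniform laws on V and on S2.  Hence the parents can be coupled to be
   equal, or the first one wild-type and the second one a mutant.  In the first case both copy
   onto the same neighbour; in the second the first chain can only lose mutants and the second
   only gain them.

   A one-step coupling preserving a relation on a finite state space extends to the whole
   chains: iterate i.i.d. random maps drawn from the product of the one-step couplings. *)

lemma pmf_wchoice:
  assumes "finite A" "\<And>x. x \<in> A \<Longrightarrow> w x > 0" "A \<noteq> {}"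
  shows "pmf (wchoice w A) x = (if x \<in> A then w x / (\<Sum>y\<in>A. w y) else 0)"
proof -
  let ?f = "\<lambda>x. if x \<in> A then w x / (\<Sum>y\<in>A. w y) else 0"
  have total_pos: "(\<Sum>y\<in>A. w y) > 0" using assms by (intro sum_pos) auto
  have weight_nonneg: "0 \<le> w x / (\<Sum>y\<in>A. w y)" if "x \<in> A" for x
    using that assms(2) total_pos by (simp add: less_imp_le)
  then have nonneg: "0 \<le> ?f x" for x by simp
  have "(\<integral>\<^sup>+x. ennreal (?f x) \<partial>count_space UNIV) = (\<Sum>x\<in>A. ennreal (?f x))"
    using assms by (intro nn_integral_count_space') auto
  also have "\<dots> = ennreal (\<Sum>x\<in>A. w x / (\<Sum>y\<in>A. w y))"
    using weight_nonneg by (subst sum_ennreal) auto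
  also have "(\<Sum>x\<in>A. w x / (\<Sum>y\<in>A. w y)) = 1"
    using total_pos by (simp add: sum_divide_distrib[symmetric])
  finally show ?thesis unfolding wchoice_def using nonneg by (subst pmf_embed_pmf) auto
qed

lemma measure_wchoice:
  assumes "finite A" "\<And>x. x \<in> A \<Longrightarrow> w x > 0" "A \<noteq> {}"
  shows "measure_pmf.prob (wchoice w A) S = (\<Sum>y\<in>A \<inter> S. w y) / (\<Sum>y\<in>A. w y)"
proof -
  have "set_pmf (wchoice w A) \<subseteq> A"
    by (auto simp: set_pmf_iff pmf_wchoice[OF assms] split: if_splits)
  then have "S \<inter> set_pmf (wchoice w A) = (A \<inter> S) \<inter> set_pmf (wchoice w A)" by auto
  then have "measure_pmf.prob (wchoice w A) S = measure_pmf.prob (wchoice w A) (A \<inter> S)"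
    by (metis measure_Int_set_pmf)
  also have "\<dots> = (\<Sum>y\<in>A \<inter> S. pmf (wchoice w A) y)"
    using assms(1) by (simp add: measure_measure_pmf_finite)
  also have "\<dots> = (\<Sum>y\<in>A \<inter> S. w y) / (\<Sum>y\<in>A. w y)"
    using assms by (simp add: pmf_wchoice sum_divide_distrib)
  finally show ?thesis .
qed

lemma wchoice_const_1:
  assumes "finite A" "A \<noteq> {}"
  shows "wchoice (\<lambda>_. 1) A = pmf_of_set A"
  by (rule pmf_eqI) (use assms in \<open>simp add: pmf_wchoice\<close>)

lemma fit_1 [simp]: "fit 1 S = (\<lambda>_. 1)"
  by (auto simp: fit_def)

lemma fit_pos: "r \<ge> 1 \<Longrightarrow> fit r S x > 0"
  by (auto simp: fit_def)

lemma sum_fit: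
  assumes "finite N"
  shows "(\<Sum>y\<in>N. fit r B y) = r * card (N \<inter> B) + card (N - B)"
  using assms by (simp add: sum.Int_Diff[of N _ B] fit_def)

section \<open>Monotone coupling of one death-Birth step\<close>

lemma rel_pmf_bernoulli_pmf_mono:
  assumes "0 \<le> p" "p \<le> q" "q \<le> 1"
  shows "rel_pmf (\<longrightarrow>) (bernoulli_pmf p) (bernoulli_pmf q)"
proof -
  define C where "C = bind_pmf (bernoulli_pmf q) (\<lambda>b. if b
     then map_pmf (\<lambda>c. (c, True)) (bernoulli_pmf (p / q)) else return_pmf (False, False))"
  have ratio: "0 \<le> p / q" "p / q \<le> 1" using assms by (auto simp: divide_le_eq)
  have "map_pmf fst C = bernoulli_pmf p"
  proof (rule pmf_eqI)
    fix b :: bool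
    have "pmf (map_pmf fst C) b
        = pmf (bernoulli_pmf (p / q)) b * q + pmf (return_pmf False) b * (1 - q)"
      using assms unfolding C_def map_bind_pmf pmf_bind by (simp add: pmf.map_comp o_def)
    also have "\<dots> = pmf (bernoulli_pmf p) b"
      using assms ratio by (cases b; cases "q = 0") (auto simp: field_simps)
    finally show "pmf (map_pmf fst C) b = pmf (bernoulli_pmf p) b" .
  qed
  moreover have "map_pmf snd C = bind_pmf (bernoulli_pmf q) return_pmf"
    unfolding C_def map_bind_pmf by (intro bind_pmf_cong) (simp_all add: pmf.map_comp o_def)
  then have "map_pmf snd C = bernoulli_pmf q" by (simp add: bind_return_pmf')
  moreover have "x \<longrightarrow> y" if "(x, y) \<in> set_pmf C" for x y
    using that unfolding C_def by (auto split: if_splits)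
  ultimately show ?thesis by (intro rel_pmf.intros[of C]) auto
qed

lemma map_pmf_mem_eq_bernoulli_pmf:
  "map_pmf (\<lambda>u. u \<in> S) W = bernoulli_pmf (measure_pmf.prob W S)"
proof (rule pmf_eqI)
  fix b :: bool
  have "(\<lambda>u. u \<in> S) -` {True} = S" "(\<lambda>u. u \<in> S) -` {False} = UNIV - S" by auto
  then show "pmf (map_pmf (\<lambda>u. u \<in> S) W) b = pmf (bernoulli_pmf (measure_pmf.prob W S)) b"
    using measure_pmf.prob_compl[of S W] by (cases b) (simp_all add: pmf_map)
qed

lemma copy_type_mono: "A \<subseteq> B \<Longrightarrow> copy_type A u v \<subseteq> copy_type B u v"
  by (auto simp: copy_type_def)

lemma copy_type_subset: "u \<notin> S \<Longrightarrow> copy_type S u v \<subseteq> S"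
  by (simp add: copy_type_def)

lemma subset_copy_type: "u \<in> S \<Longrightarrow> S \<subseteq> copy_type S u v"
  by (auto simp: copy_type_def)

lemma copy_type_subset_insert: "copy_type S u v \<subseteq> insert v S"
  by (auto simp: copy_type_def)

lemma bind_copy_type_eq_map_bernoulli_pmf:
  "bind_pmf W (\<lambda>u. return_pmf (copy_type S u v)) =
   map_pmf (\<lambda>b. if b then insert v S else S - {v}) (bernoulli_pmf (measure_pmf.prob W S))"
proof -
  have "bind_pmf W (\<lambda>u. return_pmf (copy_type S u v)) =
        map_pmf (\<lambda>b. if b then insert v S else S - {v}) (map_pmf (\<lambda>u. u \<in> S) W)"
    by (simp add: map_pmf_def[symmetric] pmf.map_comp o_def copy_type_def)
  then show ?thesis by (simp add: map_pmf_mem_eq_bernoulli_pmf)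
qed

lemma measure_pmf_of_set_le_wchoice_fit:
  assumes "finite N" "N \<noteq> {}" "A \<subseteq> B" "r \<ge> 1"
  shows "measure_pmf.prob (pmf_of_set N) A \<le> measure_pmf.prob (wchoice (fit r B) N) B"
proof -
  define b where "b = real (card (N \<inter> B))"
  define c where "c = real (card (N - B))"
  have card_N: "real (card N) = b + c"
    using card_Int_Diff[OF assms(1), of B] by (simp add: b_def c_def)
  have bc_pos: "b + c > 0"
    using assms(1,2) card_N by (metis card_gt_0_iff of_nat_0_less_iff)
  have "measure_pmf.prob (pmf_of_set N) A = card (N \<inter> A) / card N"
    using assms(1,2) by (simp add: measure_pmf_of_set)
  also have "\<dots> \<le> b / (b + c)"
    unfolding card_N b_def c_def using assms(1,3) bc_pos
    by (intro divide_right_mono) (auto intro: card_mono)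
  also have "\<dots> \<le> r * b / (r * b + c)"
  proof -
    have nonneg: "0 \<le> b" "0 \<le> c" by (simp_all add: b_def c_def)
    then have "b * c * 1 \<le> b * c * r" using assms(4) by (intro mult_left_mono) auto
    moreover have "b + c \<le> r * b + c" using assms(4) nonneg mult_right_mono[of 1 r b] by simp
    ultimately show ?thesis using bc_pos by (simp add: field_simps)
  qed
  also have "r * b / (r * b + c) = measure_pmf.prob (wchoice (fit r B) N) B"
  proof -
    have "(\<Sum>y\<in>N \<inter> B. fit r B y) = r * b" by (simp add: fit_def b_def)
    moreover have "(\<Sum>y\<in>N. fit r B y) = r * b + c" using assms(1) by (simp add: sum_fit b_def c_def)
    ultimately show ?thesis using assms by (simp add: measure_wchoice fit_pos)
  qed
  finally show ?thesis .
qed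

definition refill :: "'a set \<Rightarrow> ('a \<Rightarrow> 'a \<Rightarrow> bool) \<Rightarrow> real \<Rightarrow> 'a set \<Rightarrow> 'a \<Rightarrow> 'a set pmf" where
  "refill V E r S v = (if nbrs V E v = {} then return_pmf S
     else bind_pmf (wchoice (fit r S) (nbrs V E v)) (\<lambda>u. return_pmf (copy_type S u v)))"

lemma dB_step_eq_bind_refill: "dB_step V E r S = bind_pmf (pmf_of_set V) (refill V E r S)"
  unfolding dB_step_def by (rule bind_pmf_cong) (simp_all add: refill_def)

lemma rel_pmf_refill:
  assumes "finite V" "A \<subseteq> B" "r \<ge> 1"
  shows "rel_pmf (\<subseteq>) (refill V E 1 A v) (refill V E r B v)"
proof (cases "nbrs V E v = {}")
  case False
  let ?N = "nbrs V E v"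
  let ?p = "measure_pmf.prob (wchoice (fit 1 A) ?N) A"
  let ?q = "measure_pmf.prob (wchoice (fit r B) ?N) B"
  let ?g = "\<lambda>S b. if b then insert v S else S - {v}"
  have "finite ?N" using assms(1) by (simp add: nbrs_def)
  then have "?p \<le> ?q"
    using assms False by (simp add: wchoice_const_1 measure_pmf_of_set_le_wchoice_fit)
  then have "rel_pmf (\<longrightarrow>) (bernoulli_pmf ?p) (bernoulli_pmf ?q)"
    by (intro rel_pmf_bernoulli_pmf_mono) auto
  then have "rel_pmf (\<lambda>b b'. ?g A b \<subseteq> ?g B b') (bernoulli_pmf ?p) (bernoulli_pmf ?q)"
    by (rule pmf.rel_mono_strong) (use assms(2) in auto)
  then show ?thesis
    using False
    by (simp add: refill_def bind_copy_type_eq_map_bernoulli_pmf pmf.rel_map split del: if_split)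
qed (use assms(2) in \<open>simp add: refill_def\<close>)

lemma rel_pmf_dB_step:
  assumes "finite V" "A \<subseteq> B" "r \<ge> 1"
  shows "rel_pmf (\<subseteq>) (dB_step V E 1 A) (dB_step V E r B)"
  unfolding dB_step_eq_bind_refill
  by (auto intro!: rel_pmf_bindI[of "(=)"] rel_pmf_reflI rel_pmf_refill assms)

section \<open>Monotone coupling of one Birth-death step\<close>

definition reproduce :: "'a set \<Rightarrow> ('a \<Rightarrow> 'a \<Rightarrow> bool) \<Rightarrow> 'a set \<Rightarrow> 'a \<Rightarrow> 'a set pmf" where
  "reproduce V E S u = (if nbrs V E u = {} then return_pmf S
     else bind_pmf (pmf_of_set (nbrs V E u)) (\<lambda>v. return_pmf (copy_type S u v)))"

lemma Bd_step_eq_bind_reproduce: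
  "Bd_step V E r S = bind_pmf (wchoice (fit r S) V) (reproduce V E S)"
  unfolding Bd_step_def by (rule bind_pmf_cong) (simp_all add: reproduce_def)

lemma set_pmf_reproduce:
  assumes "finite V"
  shows "set_pmf (reproduce V E S u) \<subseteq> insert S (copy_type S u ` nbrs V E u)"
  using assms by (auto simp: reproduce_def nbrs_def)

lemma rel_pmf_reproduce_mono:
  "A \<subseteq> B \<Longrightarrow> rel_pmf (\<subseteq>) (reproduce V E A u) (reproduce V E B u)"
  unfolding reproduce_def
  by (auto intro!: rel_pmf_bindI[of "(=)"] rel_pmf_reflI copy_type_mono)

lemma rel_pmf_reproduce_wild_mutant:
  assumes "finite V" "A \<subseteq> B" "u \<notin> B" "u' \<in> B"
  shows "rel_pmf (\<subseteq>) (reproduce V E A u) (reproduce V E B u')"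
proof -
  have "rel_pmf top (reproduce V E A u) (reproduce V E B u')" by simp
  then show ?thesis
  proof (rule pmf.rel_mono_strong)
    fix T T'
    assume "T \<in> set_pmf (reproduce V E A u)" "T' \<in> set_pmf (reproduce V E B u')"
    then have "T \<subseteq> A" "B \<subseteq> T'"
      using set_pmf_reproduce[OF assms(1)] assms(2-4)
        copy_type_subset[of u A] subset_copy_type[of u' B]
      by blast+
    then show "T \<subseteq> T'" using assms(2) by blast
  qed
qed

lemma bind_pmf_of_set_resample:
  assumes "finite V" "B \<subseteq> V" "B \<noteq> {}"
  shows "bind_pmf (pmf_of_set V) (\<lambda>u. if u \<in> B then return_pmf u else pmf_of_set B) = pmf_of_set B"
proof (rule pmf_eqI)
  fix y
  have finite_B: "finite B" using assms(1,2) by (rule finite_subset[rotated])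
  have card_V: "real (card V) = card B + card (V - B)"
    using assms(1,2) by (simp add: card_Diff_subset card_mono finite_B)
  have "(\<Sum>u\<in>B. pmf (return_pmf u) y) = (indicator B y :: real)"
    using finite_B by (simp add: indicator_def)
  then have "(\<Sum>u\<in>V. pmf (if u \<in> B then return_pmf u else pmf_of_set B) y)
      = indicator B y + (\<Sum>u\<in>V - B. indicator B y / card B :: real)"
    using assms finite_B by (simp add: sum.subset_diff[OF assms(2,1)])
  also have "\<dots> = (indicator B y :: real) * card V / card B"
    using finite_B assms(3) by (simp add: card_V indicator_def field_simps)
  finally have sum_eq: "(\<Sum>u\<in>V. pmf (if u \<in> B then return_pmf u else pmf_of_set B) y)
      = (indicator B y :: real) * card V / card B" .
  have "V \<noteq> {}" using assms(2,3) by blast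
  then have "card V > 0" using assms(1) by (simp add: card_gt_0_iff)
  then show "pmf (bind_pmf (pmf_of_set V) (\<lambda>u. if u \<in> B then return_pmf u else pmf_of_set B)) y
      = pmf (pmf_of_set B) y"
    using sum_eq \<open>V \<noteq> {}\<close> assms finite_B by (simp add: pmf_bind_pmf_of_set)
qed

lemma rel_pmf_pmf_of_set_subset:
  assumes "finite V" "B \<subseteq> V" "B \<noteq> {}"
  shows "rel_pmf (\<lambda>u u'. u = u' \<or> u \<notin> B \<and> u' \<in> B) (pmf_of_set V) (pmf_of_set B)"
proof -
  have "finite B" using assms(1,2) by (rule finite_subset[rotated])
  have "rel_pmf (=) (pmf_of_set V) (pmf_of_set V)" by (rule rel_pmf_reflI) simp
  then have "rel_pmf (\<lambda>u u'. u = u' \<or> u \<notin> B \<and> u' \<in> B) (bind_pmf (pmf_of_set V) return_pmf)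
      (bind_pmf (pmf_of_set V) (\<lambda>u. if u \<in> B then return_pmf u else pmf_of_set B))"
    by (rule rel_pmf_bindI) (use assms \<open>finite B\<close> in \<open>auto simp: rel_pmf_return_pmf1\<close>)
  then show ?thesis by (simp add: bind_return_pmf' bind_pmf_of_set_resample[OF assms])
qed

text \<open>A mutant's fitness \<open>r\<close> splits as \<open>1 + (r - 1)\<close>: the unit weights of all vertices
  give the uniform law on \<open>V\<close>, the excess weights the uniform law on \<open>B\<close>.\<close>

lemma wchoice_fit_eq_mixture:
  fixes r :: real
  assumes "finite V" "B \<subseteq> V" "B \<noteq> {}" "r \<ge> 1"
  defines "\<alpha> \<equiv> card V / (r * card B + card (V - B))"
  shows "wchoice (fit r B) V
      = bind_pmf (bernoulli_pmf \<alpha>) (\<lambda>c. if c then pmf_of_set V else pmf_of_set B)"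
      (is "_ = ?mixture")
    and "0 \<le> \<alpha>" "\<alpha> \<le> 1"
proof -
  define b where "b = real (card B)"
  define c where "c = real (card (V - B))"
  have finite_B: "finite B" using assms(1,2) by (rule finite_subset[rotated])
  have "V \<noteq> {}" using assms(2,3) by blast
  have b_pos: "b > 0" using finite_B assms(3) by (simp add: b_def card_gt_0_iff)
  have c_nonneg: "c \<ge> 0" by (simp add: c_def)
  have rb: "r * b \<ge> b" using assms(4) b_pos mult_right_mono[of 1 r b] by simp
  then have rbc_pos: "r * b + c > 0" using b_pos c_nonneg by linarith
  have \<alpha>: "\<alpha> = (b + c) / (r * b + c)"
    using assms(1,2) by (simp add: \<alpha>_def b_def c_def card_Diff_subset card_mono finite_B)
  show "0 \<le> \<alpha>" unfolding \<alpha> using rbc_pos b_pos c_nonneg by simp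
  show "\<alpha> \<le> 1" unfolding \<alpha> using rbc_pos rb by simp
  have V_weight: "\<alpha> / (b + c) = 1 / (r * b + c)" unfolding \<alpha> using b_pos c_nonneg by simp
  have "1 - \<alpha> = b * (r - 1) / (r * b + c)"
    unfolding \<alpha> using rbc_pos by (simp add: field_simps)
  then have B_weight: "(1 - \<alpha>) / b = (r - 1) / (r * b + c)"
    using b_pos by simp
  have total: "(\<Sum>y\<in>V. fit r B y) = r * b + c"
    using assms(1,2) by (simp add: sum_fit b_def c_def Int_absorb1)
  show "wchoice (fit r B) V = ?mixture"
  proof (rule pmf_eqI)
    fix y
    have "pmf ?mixture y = indicator V y * (\<alpha> / (b + c)) + indicator B y * ((1 - \<alpha>) / b)"
      using \<open>0 \<le> \<alpha>\<close> \<open>\<alpha> \<le> 1\<close> assms(1,2,3) finite_B \<open>V \<noteq> {}\<close>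
      by (simp add: pmf_bind b_def c_def card_Diff_subset card_mono)
    also have "\<dots> = (if y \<in> V then fit r B y / (r * b + c) else 0)"
      using assms(2) unfolding V_weight B_weight
      by (auto simp: fit_def indicator_def add_divide_distrib[symmetric])
    also have "\<dots> = pmf (wchoice (fit r B) V) y"
      using pmf_wchoice[of V "fit r B" y] assms(1,4) \<open>V \<noteq> {}\<close> total by (simp add: fit_pos)
    finally show "pmf (wchoice (fit r B) V) y = pmf ?mixture y" by simp
  qed
qed

lemma rel_pmf_pmf_of_set_wchoice_fit:
  assumes "finite V" "V \<noteq> {}" "B \<subseteq> V" "r \<ge> 1"
  shows "rel_pmf (\<lambda>u u'. u = u' \<or> u \<notin> B \<and> u' \<in> B) (pmf_of_set V) (wchoice (fit r B) V)"
proof (cases "B = {}")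
  case True
  then have "fit r B = (\<lambda>_. 1)" by (auto simp: fit_def)
  then have "wchoice (fit r B) V = pmf_of_set V"
    using assms(1,2) by (simp add: wchoice_const_1)
  then show ?thesis by (auto intro: rel_pmf_reflI)
next
  case False
  define \<alpha> where "\<alpha> = card V / (r * card B + card (V - B))"
  note mixture = wchoice_fit_eq_mixture[OF assms(1,3) False assms(4), folded \<alpha>_def]
  have "rel_pmf (=) (bernoulli_pmf \<alpha>) (bernoulli_pmf \<alpha>)" by (rule rel_pmf_reflI) simp
  then have "rel_pmf (\<lambda>u u'. u = u' \<or> u \<notin> B \<and> u' \<in> B)
      (bind_pmf (bernoulli_pmf \<alpha>) (\<lambda>_. pmf_of_set V))
      (bind_pmf (bernoulli_pmf \<alpha>) (\<lambda>c. if c then pmf_of_set V else pmf_of_set B))"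
    by (rule rel_pmf_bindI)
      (auto intro: rel_pmf_reflI rel_pmf_pmf_of_set_subset[OF assms(1,3) False])
  then show ?thesis by (simp add: mixture)
qed

lemma rel_pmf_Bd_step:
  assumes "finite V" "V \<noteq> {}" "A \<subseteq> B" "B \<subseteq> V" "r \<ge> 1"
  shows "rel_pmf (\<subseteq>) (Bd_step V E 1 A) (Bd_step V E r B)"
proof -
  have "rel_pmf (\<lambda>u u'. u = u' \<or> u \<notin> B \<and> u' \<in> B) (pmf_of_set V) (wchoice (fit r B) V)"
    using assms by (intro rel_pmf_pmf_of_set_wchoice_fit)
  then have "rel_pmf (\<subseteq>) (bind_pmf (pmf_of_set V) (reproduce V E A))
      (bind_pmf (wchoice (fit r B) V) (reproduce V E B))"
    by (rule rel_pmf_bindI)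
      (use assms in \<open>auto intro: rel_pmf_reproduce_mono rel_pmf_reproduce_wild_mutant\<close>)
  then show ?thesis
    using assms(1,2) by (simp add: Bd_step_eq_bind_reproduce wchoice_const_1)
qed

lemma set_pmf_mixed_step_subset:
  assumes "finite V" "V \<noteq> {}" "S \<subseteq> V" "T \<in> set_pmf (mixed_step \<delta> V E r S)"
  shows "T \<subseteq> V"
proof -
  have "T \<in> set_pmf (dB_step V E r S) \<or> T \<in> set_pmf (Bd_step V E r S)"
    using assms(4) by (auto simp: mixed_step_def split: if_splits)
  then have "T = S \<or> (\<exists>u. \<exists>v\<in>V. T = copy_type S u v)"
  proof
    assume "T \<in> set_pmf (dB_step V E r S)"
    then show ?thesis using assms(1,2) by (auto simp: dB_step_def split: if_splits)
  next
    assume "T \<in> set_pmf (Bd_step V E r S)"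
    then obtain u where "T \<in> set_pmf (reproduce V E S u)"
      by (auto simp: Bd_step_eq_bind_reproduce)
    then show ?thesis using set_pmf_reproduce[OF assms(1), of E S u] by (auto simp: nbrs_def)
  qed
  then show ?thesis
  proof
    assume "\<exists>u. \<exists>v\<in>V. T = copy_type S u v"
    then obtain u v where "v \<in> V" "T = copy_type S u v" by blast
    then show ?thesis using copy_type_subset_insert[of S u v] assms(3) by auto
  qed (use assms(3) in simp)
qed

lemma rel_pmf_mixed_step:
  assumes "finite V" "V \<noteq> {}" "A \<subseteq> B" "B \<subseteq> V" "r \<ge> 1"
  shows "rel_pmf (\<lambda>A' B'. A' \<subseteq> B' \<and> B' \<subseteq> V) (mixed_step \<delta> V E 1 A) (mixed_step \<delta> V E r B)"
proof -
  have "rel_pmf (=) (bernoulli_pmf \<delta>) (bernoulli_pmf \<delta>)" by (rule rel_pmf_reflI) simp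
  then have "rel_pmf (\<subseteq>) (mixed_step \<delta> V E 1 A) (mixed_step \<delta> V E r B)"
    unfolding mixed_step_def
    by (rule rel_pmf_bindI) (use assms in \<open>auto intro: rel_pmf_dB_step rel_pmf_Bd_step\<close>)
  then show ?thesis
    by (rule pmf.rel_mono_strong) (use set_pmf_mixed_step_subset[OF assms(1,2,4)] in blast)
qed

section \<open>Markovian couplings via i.i.d. random maps\<close>

abbreviation path_space :: "(nat \<Rightarrow> 's) measure" where
  "path_space \<equiv> PiM UNIV (\<lambda>_. count_space UNIV)"

text \<open>Values outside \<open>\<Sigma>\<close> are redirected to \<open>d\<close>, so that a walk started in the finite set
  \<open>\<Sigma>\<close> stays there for every sequence of maps; this is what makes it measurable.\<close>

definition confine :: "'s set \<Rightarrow> 's \<Rightarrow> ('s \<Rightarrow> 's) \<Rightarrow> 's \<Rightarrow> 's" where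
  "confine \<Sigma> d f s = (if f s \<in> \<Sigma> then f s else d)"

primrec walk :: "'s set \<Rightarrow> 's \<Rightarrow> 's \<Rightarrow> ('s \<Rightarrow> 's) stream \<Rightarrow> nat \<Rightarrow> 's" where
  "walk \<Sigma> d s \<omega> 0 = s"
| "walk \<Sigma> d s \<omega> (Suc n) = walk \<Sigma> d (confine \<Sigma> d (shd \<omega>) s) (stl \<omega>) n"

lemma confine_in: "d \<in> \<Sigma> \<Longrightarrow> confine \<Sigma> d f s \<in> \<Sigma>"
  by (simp add: confine_def)

lemma walk_in: "s \<in> \<Sigma> \<Longrightarrow> d \<in> \<Sigma> \<Longrightarrow> walk \<Sigma> d s \<omega> n \<in> \<Sigma>"
  by (induction n arbitrary: s \<omega>) (auto simp: confine_in)

lemma space_stream_space_pmf [simp]: "space (stream_space (measure_pmf D)) = UNIV"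
  by (simp add: space_stream_space)

lemma measurable_walk:
  assumes "finite \<Sigma>" "d \<in> \<Sigma>" "s \<in> \<Sigma>"
  shows "(\<lambda>\<omega>. walk \<Sigma> d s \<omega> n) \<in> stream_space (measure_pmf D) \<rightarrow>\<^sub>M count_space UNIV"
  using assms(3)
proof (induction n arbitrary: s)
  case (Suc n)
  have first_step: "(\<lambda>\<omega>. confine \<Sigma> d (shd \<omega>) s) \<in> stream_space (measure_pmf D) \<rightarrow>\<^sub>M count_space \<Sigma>"
    by (rule measurable_compose[OF measurable_shd]) (simp add: assms(2) confine_in)
  have rest: "(\<lambda>\<omega>. walk \<Sigma> d s' (stl \<omega>) n) \<in> stream_space (measure_pmf D) \<rightarrow>\<^sub>M count_space UNIV"
    if "s' \<in> \<Sigma>" for s'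
    using Suc.IH[OF that] by (rule measurable_compose[OF measurable_stl])
  show ?case
    using measurable_compose_countable'[OF rest first_step] assms(1) by (simp add: countable_finite)
qed simp

lemma measurable_walk_path:
  assumes "finite \<Sigma>" "d \<in> \<Sigma>" "s \<in> \<Sigma>"
  shows "(\<lambda>\<omega> t. walk \<Sigma> d s \<omega> t) \<in> stream_space (measure_pmf D) \<rightarrow>\<^sub>M path_space"
  by (rule measurable_PiM_single') (simp_all add: measurable_walk[OF assms])

lemma walk_cylinder_Cons:
  "{\<omega>. \<forall>i\<le>Suc n. \<pi> (walk \<Sigma> d s (f ## \<omega>) i) = (h # hs) ! i}
   = (if \<pi> s = h then {\<omega>. \<forall>i\<le>n. \<pi> (walk \<Sigma> d (confine \<Sigma> d f s) \<omega> i) = hs ! i} else {})"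
proof -
  have "(\<forall>i\<le>Suc n. P i) \<longleftrightarrow> P 0 \<and> (\<forall>i\<le>n. P (Suc i))" for P :: "nat \<Rightarrow> bool"
    by (metis Suc_le_mono le0 not0_implies_Suc)
  then show ?thesis by auto
qed

lemma sets_walk_cylinder:
  assumes "finite \<Sigma>" "d \<in> \<Sigma>" "s \<in> \<Sigma>"
  shows "{\<omega>. \<forall>i\<le>n. \<pi> (walk \<Sigma> d s \<omega> i) = hs ! i} \<in> sets (stream_space (measure_pmf D))"
proof -
  have "{\<omega>. \<forall>i\<le>n. \<pi> (walk \<Sigma> d s \<omega> i) = hs ! i}
      = (\<Inter>i\<le>n. (\<lambda>\<omega>. walk \<Sigma> d s \<omega> i) -` {x. \<pi> x = hs ! i} \<inter> space (stream_space (measure_pmf D)))"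
    by auto
  also have "\<dots> \<in> sets (stream_space (measure_pmf D))"
    by (intro sets.finite_INT ballI measurable_sets[OF measurable_walk[OF assms]]) simp_all
  finally show ?thesis .
qed

text \<open>The hypothesis \<open>lumped\<close> says that the law of \<open>\<pi> (f s)\<close> depends on \<open>s\<close> only through
  \<open>\<pi> s\<close>; then \<open>\<pi>\<close> of the walk driven by i.i.d. maps \<open>f\<close> is Markov with kernel \<open>K\<close>.\<close>

lemma emeasure_walk_cylinder:
  fixes \<pi> :: "'s \<Rightarrow> 't" and K :: "'t \<Rightarrow> 't pmf"
  assumes "finite \<Sigma>" "d \<in> \<Sigma>"
    and lumped: "\<And>s. s \<in> \<Sigma> \<Longrightarrow> map_pmf (\<lambda>f. \<pi> (confine \<Sigma> d f s)) D = K (\<pi> s)"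
    and "s \<in> \<Sigma>" "length hs = Suc n"
  shows "emeasure (stream_space (measure_pmf D)) {\<omega>. \<forall>i\<le>n. \<pi> (walk \<Sigma> d s \<omega> i) = hs ! i}
    = ennreal ((if \<pi> s = hs ! 0 then 1 else 0) * (\<Prod>i<n. pmf (K (hs ! i)) (hs ! Suc i)))"
  using assms(4,5)
proof (induction n arbitrary: s hs)
  case 0
  interpret prob_space "stream_space (measure_pmf D)"
    by (rule prob_space.prob_space_stream_space[OF measure_pmf.prob_space_axioms])
  show ?case
    using emeasure_space_1 by (cases "\<pi> s = hs ! 0") simp_all
next
  case (Suc n)
  let ?S = "stream_space (measure_pmf D)"
  obtain h hs' where hs: "hs = h # hs'" and len: "length hs' = Suc n"
    using Suc.prems(2) by (cases hs) auto
  define Q where "Q = (\<Prod>i<n. pmf (K (hs' ! i)) (hs' ! Suc i))"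
  have "Q \<ge> 0" unfolding Q_def by (intro prod_nonneg) auto
  have "emeasure ?S {\<omega>. \<forall>i\<le>Suc n. \<pi> (walk \<Sigma> d s \<omega> i) = hs ! i}
      = (\<integral>\<^sup>+f. emeasure ?S {\<omega>. \<forall>i\<le>Suc n. \<pi> (walk \<Sigma> d s (f ## \<omega>) i) = hs ! i} \<partial>measure_pmf D)"
    using sets_walk_cylinder[OF assms(1,2) Suc.prems(1)]
    by (subst prob_space.emeasure_stream_space[OF measure_pmf.prob_space_axioms]) auto
  also have "\<dots> = (\<integral>\<^sup>+f. (if \<pi> s = h
      then ennreal Q * indicator {f. \<pi> (confine \<Sigma> d f s) = hs' ! 0} f else 0) \<partial>measure_pmf D)"
    unfolding hs walk_cylinder_Cons Q_def using \<open>Q \<ge> 0\<close>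
    by (intro nn_integral_cong) (simp add: Suc.IH[OF confine_in[OF assms(2)] len] indicator_def)
  also have "\<dots> = (if \<pi> s = h then ennreal Q * ennreal (pmf (K (\<pi> s)) (hs' ! 0)) else 0)"
    unfolding lumped[OF Suc.prems(1), symmetric]
    by (simp add: nn_integral_cmult_indicator pmf_map measure_pmf.emeasure_eq_measure vimage_def)
  also have "\<dots>
      = ennreal ((if \<pi> s = hs ! 0 then 1 else 0) * (\<Prod>i<Suc n. pmf (K (hs ! i)) (hs ! Suc i)))"
    using \<open>Q \<ge> 0\<close> unfolding prod.lessThan_Suc_shift Q_def hs
    by (simp add: ennreal_mult' mult.commute)
  finally show ?case .
qed

lemma sets_path_space_All: "{\<omega> \<in> space path_space. \<forall>i. P i (\<omega> i)} \<in> sets path_space"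
proof (rule sets.sets_Collect_countable_All)
  fix i
  have "(\<lambda>\<omega>. \<omega> i) \<in> path_space \<rightarrow>\<^sub>M count_space UNIV"
    by (rule measurable_component_singleton) simp
  then have "(\<lambda>\<omega>. \<omega> i) -` {x. P i x} \<inter> space path_space \<in> sets path_space"
    by (rule measurable_sets) simp
  also have "(\<lambda>\<omega>. \<omega> i) -` {x. P i x} \<inter> space path_space = {\<omega> \<in> space path_space. P i (\<omega> i)}"
    by blast
  finally show "{\<omega> \<in> space path_space. P i (\<omega> i)} \<in> sets path_space" .
qed

lemma prob_space_walk_distr:
  assumes "finite \<Sigma>" "d \<in> \<Sigma>"
  shows "prob_space (distr (stream_space (measure_pmf D)) path_space (\<lambda>\<omega> t. walk \<Sigma> d d \<omega> t))"
  by (intro prob_space.prob_space_distr prob_space.prob_space_stream_space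
      measure_pmf.prob_space_axioms measurable_walk_path assms assms(2))

lemma AE_walk_in:
  assumes "finite \<Sigma>" "d \<in> \<Sigma>"
  shows "AE \<omega> in distr (stream_space (measure_pmf D)) path_space (\<lambda>\<omega> t. walk \<Sigma> d d \<omega> t).
    \<forall>t. \<omega> t \<in> \<Sigma>"
  by (subst AE_distr_iff[OF measurable_walk_path[OF assms assms(2)] sets_path_space_All])
    (simp add: walk_in assms(2))

lemma is_markov_chain_walk:
  fixes \<pi> :: "'s \<Rightarrow> 't" and K :: "'t \<Rightarrow> 't pmf"
  assumes "finite \<Sigma>" "d \<in> \<Sigma>"
    and lumped: "\<And>s. s \<in> \<Sigma> \<Longrightarrow> map_pmf (\<lambda>f. \<pi> (confine \<Sigma> d f s)) D = K (\<pi> s)"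
  shows "is_markov_chain (distr (stream_space (measure_pmf D)) path_space (\<lambda>\<omega> t. walk \<Sigma> d d \<omega> t))
    (\<lambda>t \<omega>. \<pi> (\<omega> t)) K (\<pi> d)"
proof -
  let ?S = "stream_space (measure_pmf D)"
  let ?M = "distr ?S path_space (\<lambda>\<omega> t. walk \<Sigma> d d \<omega> t)"
  note walk_path = measurable_walk_path[OF assms(1,2,2)]
  have "(\<lambda>\<omega>. \<pi> (\<omega> t)) \<in> ?M \<rightarrow>\<^sub>M count_space UNIV" for t
    unfolding measurable_distr_eq1
    by (rule measurable_compose[OF measurable_component_singleton]) simp_all
  moreover have "measure ?M {\<omega> \<in> space ?M. \<forall>i\<le>n. \<pi> (\<omega> i) = hs ! i}
      = (if hs ! 0 = \<pi> d then 1 else 0) * (\<Prod>i<n. pmf (K (hs ! i)) (hs ! Suc i))"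
    if "length hs = Suc n" for n hs
  proof -
    have "measure ?M {\<omega> \<in> space ?M. \<forall>i\<le>n. \<pi> (\<omega> i) = hs ! i}
        = measure ?S ((\<lambda>\<omega> t. walk \<Sigma> d d \<omega> t) -` {\<omega> \<in> space path_space. \<forall>i\<le>n. \<pi> (\<omega> i) = hs ! i}
            \<inter> space ?S)"
      unfolding space_distr by (rule measure_distr[OF walk_path sets_path_space_All])
    also have "(\<lambda>\<omega> t. walk \<Sigma> d d \<omega> t) -` {\<omega> \<in> space path_space. \<forall>i\<le>n. \<pi> (\<omega> i) = hs ! i} \<inter> space ?S
        = {\<omega>. \<forall>i\<le>n. \<pi> (walk \<Sigma> d d \<omega> i) = hs ! i}"
      by (auto simp: space_PiM)
    also have "measure ?S {\<omega>. \<forall>i\<le>n. \<pi> (walk \<Sigma> d d \<omega> i) = hs ! i}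
        = (if \<pi> d = hs ! 0 then 1 else 0) * (\<Prod>i<n. pmf (K (hs ! i)) (hs ! Suc i))"
      by (simp add: measure_def emeasure_walk_cylinder[OF assms assms(2) that] prod_nonneg)
    finally show ?thesis by (simp add: eq_commute)
  qed
  ultimately show ?thesis unfolding is_markov_chain_def by blast
qed

lemma markov_chain_coupling:
  fixes K :: "'s \<Rightarrow> 's pmf" and L :: "'t \<Rightarrow> 't pmf" and R :: "('s \<times> 't) set"
  assumes "finite R" "(x0, y0) \<in> R"
    and coupled: "\<And>x y. (x, y) \<in> R \<Longrightarrow> rel_pmf (\<lambda>x' y'. (x', y') \<in> R) (K x) (L y)"
  shows "\<exists>(M :: (nat \<Rightarrow> 's \<times> 't) measure) X1 X2. prob_space M \<and>
    is_markov_chain M X1 K x0 \<and> is_markov_chain M X2 L y0 \<and> (AE \<omega> in M. \<forall>t. (X1 t \<omega>, X2 t \<omega>) \<in> R)"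
proof -
  have "\<forall>p\<in>R. \<exists>C. set_pmf C \<subseteq> R \<and> map_pmf fst C = K (fst p) \<and> map_pmf snd C = L (snd p)"
    using coupled by (auto simp: pmf.in_rel)
  then obtain C where C: "\<And>p. p \<in> R \<Longrightarrow>
      set_pmf (C p) \<subseteq> R \<and> map_pmf fst (C p) = K (fst p) \<and> map_pmf snd (C p) = L (snd p)"
    by metis
  define d where "d = (x0, y0)"
  define D where "D = Pi_pmf R d C"
  have lumped: "map_pmf (\<lambda>f. \<pi> (confine R d f p)) D = map_pmf \<pi> (C p)"
    if "p \<in> R" for p and \<pi> :: "'s \<times> 't \<Rightarrow> 'u"
  proof -
    have "map_pmf (\<lambda>f. \<pi> (confine R d f p)) D
        = map_pmf (\<lambda>q. \<pi> (if q \<in> R then q else d)) (map_pmf (\<lambda>f. f p) D)"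
      by (simp add: pmf.map_comp o_def confine_def)
    also have "map_pmf (\<lambda>f. f p) D = C p"
      using Pi_pmf_component[OF assms(1), of p d C] that by (simp add: D_def)
    also have "map_pmf (\<lambda>q. \<pi> (if q \<in> R then q else d)) (C p) = map_pmf \<pi> (C p)"
      using C[OF that] by (intro pmf.map_cong) auto
    finally show ?thesis .
  qed
  have "d \<in> R" using assms(2) by (simp add: d_def)
  let ?M = "distr (stream_space (measure_pmf D)) path_space (\<lambda>\<omega> t. walk R d d \<omega> t)"
  have "is_markov_chain ?M (\<lambda>t \<omega>. fst (\<omega> t)) K (fst d)"
    by (rule is_markov_chain_walk[OF assms(1) \<open>d \<in> R\<close>]) (use lumped[of _ fst] C in simp)
  moreover have "is_markov_chain ?M (\<lambda>t \<omega>. snd (\<omega> t)) L (snd d)"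
    by (rule is_markov_chain_walk[OF assms(1) \<open>d \<in> R\<close>]) (use lumped[of _ snd] C in simp)
  ultimately show ?thesis
    using prob_space_walk_distr[OF assms(1) \<open>d \<in> R\<close>] AE_walk_in[OF assms(1) \<open>d \<in> R\<close>]
    unfolding d_def by fastforce
qed

theorem mainTheorem13:
  fixes V :: "'a set" and E :: "'a \<Rightarrow> 'a \<Rightarrow> bool"
    and \<delta> r1 r2 :: real and S0 :: "'a set"
  assumes "finite V" and "V \<noteq> {}"
    and "\<And>u v. E u v \<Longrightarrow> u \<in> V \<and> v \<in> V"
    and "\<And>u v. E u v \<Longrightarrow> E v u"
    and "\<And>u. \<not> E u u"
    and "0 \<le> \<delta>" and "\<delta> \<le> 1"
    and "r1 = 1" and "r2 \<ge> r1"
    and "S0 \<subseteq> V"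
  shows "\<exists>(M :: (nat \<Rightarrow> 'a set \<times> 'a set) measure) X1 X2.
           prob_space M \<and>
           is_markov_chain M X1 (mixed_step \<delta> V E r1) S0 \<and>
           is_markov_chain M X2 (mixed_step \<delta> V E r2) S0 \<and>
           (AE \<omega> in M. \<forall>t. X1 t \<omega> \<subseteq> X2 t \<omega>)"
proof -
  define R where "R = {(A, B). A \<subseteq> B \<and> B \<subseteq> V}"
  have "R \<subseteq> Pow V \<times> Pow V" by (auto simp: R_def)
  then have "finite R" by (rule finite_subset) (simp add: assms(1))
  have "(S0, S0) \<in> R" using assms(10) by (simp add: R_def)
  have coupled: "rel_pmf (\<lambda>A' B'. (A', B') \<in> R) (mixed_step \<delta> V E r1 A) (mixed_step \<delta> V E r2 B)"
    if "(A, B) \<in> R" for A B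
    using that rel_pmf_mixed_step[OF assms(1,2), of A B r2 \<delta> E] assms(8,9) by (simp add: R_def)
  have "\<exists>(M :: (nat \<Rightarrow> 'a set \<times> 'a set) measure) X1 X2. prob_space M \<and>
      is_markov_chain M X1 (mixed_step \<delta> V E r1) S0 \<and>
      is_markov_chain M X2 (mixed_step \<delta> V E r2) S0 \<and>
      (AE \<omega> in M. \<forall>t. (X1 t \<omega>, X2 t \<omega>) \<in> R)"
    by (rule markov_chain_coupling[OF \<open>finite R\<close> \<open>(S0, S0) \<in> R\<close>]) (rule coupled)
  then obtain M :: "(nat \<Rightarrow> 'a set \<times> 'a set) measure" and X1 X2 where
    chains: "prob_space M" "is_markov_chain M X1 (mixed_step \<delta> V E r1) S0"
      "is_markov_chain M X2 (mixed_step \<delta> V E r2) S0"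
    and in_R: "AE \<omega> in M. \<forall>t. (X1 t \<omega>, X2 t \<omega>) \<in> R"
    by blast
  have "AE \<omega> in M. \<forall>t. X1 t \<omega> \<subseteq> X2 t \<omega>"
    using in_R by (rule eventually_mono) (simp add: R_def)
  then show ?thesis
    using chains by (intro exI[of _ M] exI[of _ X1] exI[of _ X2]) simp
qed

end
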